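(* Let $G$ be a concurrent game structure, $T\subseteq S$, with all states of $T\cup W_2$ absorbing. Let $\xi_1^{\mathrm{unif}}$ be the player-1 selector that at every state $s\in S\setminus(T\cup W_2)$ chooses all moves in $\Gamma_1(s)$ uniformly at random. Then $\xi_1^{\mathrm{unif}}$ is proper.
   Context: Concurrent game structure $G=(S,M,\Gamma_1,\Gamma_2,\delta)$: finite states $S$, finite moves $M$, nonempty move sets $\Gamma_i(s)\subseteq M$, transition probabilities $\delta(s,a_1,a_2)\in\mathrm{Distr}(S)$ (moves chosen simultaneously and independently). A state is absorbing if every move pair leads back to it with probability 1. A selector for player $i$ assigns to each state $s$ a distribution on $\Gamma_i(s)$; $\overline{\xi}$ is the memoryless strategy playing $\xi$ at every step. $\Pr_s^{\pi_1,\pi_2}$ is the measure on plays from $s$ induced by strategies $\pi_1,\pi_2$. $\mathrm{Reach}(X)$: plays visiting $X$. $\mathrm{val}_1(\mathrm{Reach}(T))(s)=\sup_{\pi_1}\inf_{\pi_2}\Pr_s^{\pi_1,\pi_2}(\mathrm{Reach}(T))$, $W_2=\{s:\mathrm{val}_1(\mathrm{Reach}(T))(s)=0\}$. A player-1 strategy $\pi_1$ is proper if for every player-2 strategy $\pi_2$ and all $s\in S\setminus(T\cup W_2)$, $\Pr_s^{\pi_1,\pi_2}(\mathrm{Reach}(T\cup W_2))=1$; a selector $\xi_1$ is proper if $\overline{\xi}_1$ is proper. *)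

theory Defs
  imports "HOL-Probability.Probability"
begin

definition cgs :: "('s::finite \<Rightarrow> 'm::finite set) \<Rightarrow> ('s \<Rightarrow> 'm set) \<Rightarrow> ('s \<Rightarrow> 'm \<Rightarrow> 'm \<Rightarrow> 's pmf) \<Rightarrow> bool" where
  "cgs G1 G2 delta \<longleftrightarrow> (\<forall>s. G1 s \<noteq> {} \<and> G2 s \<noteq> {})"

definition absorbing :: "('s \<Rightarrow> 'm set) \<Rightarrow> ('s \<Rightarrow> 'm set) \<Rightarrow> ('s \<Rightarrow> 'm \<Rightarrow> 'm \<Rightarrow> 's pmf) \<Rightarrow> 's \<Rightarrow> bool" where
  "absorbing G1 G2 delta s \<longleftrightarrow> (\<forall>a1\<in>G1 s. \<forall>a2\<in>G2 s. delta s a1 a2 = return_pmf s)"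

definition strategies :: "('s \<Rightarrow> 'm set) \<Rightarrow> ('s list \<Rightarrow> 'm pmf) set" where
  "strategies G = {\<pi>. \<forall>h. h \<noteq> [] \<longrightarrow> set_pmf (\<pi> h) \<subseteq> G (last h)}"

definition selector :: "('s \<Rightarrow> 'm set) \<Rightarrow> ('s \<Rightarrow> 'm pmf) \<Rightarrow> bool" where
  "selector G \<xi> \<longleftrightarrow> (\<forall>s. set_pmf (\<xi> s) \<subseteq> G s)"

definition memoryless :: "('s \<Rightarrow> 'm pmf) \<Rightarrow> ('s list \<Rightarrow> 'm pmf)" where
  "memoryless \<xi> = (\<lambda>h. \<xi> (last h))"

text \<open>Distribution of the first n+1 states of the play from s under strategies p1, p2
  (moves chosen simultaneously and independently).\<close>

primrec hist_pmf :: "('s \<Rightarrow> 'm \<Rightarrow> 'm \<Rightarrow> 's pmf) \<Rightarrow> ('s list \<Rightarrow> 'm pmf) \<Rightarrow> ('s list \<Rightarrow> 'm pmf)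
    \<Rightarrow> 's \<Rightarrow> nat \<Rightarrow> 's list pmf" where
  "hist_pmf delta p1 p2 s 0 = return_pmf [s]"
| "hist_pmf delta p1 p2 s (Suc n) =
     do { h \<leftarrow> hist_pmf delta p1 p2 s n;
          a1 \<leftarrow> p1 h; a2 \<leftarrow> p2 h;
          t \<leftarrow> delta (last h) a1 a2;
          return_pmf (h @ [t]) }"

text \<open>Pr_s^{p1,p2}(Reach X): the measure of the plays visiting X, computed as the limit
  (supremum) of the probabilities of the increasing events "X is visited within n steps".\<close>

definition prob_reach :: "('s \<Rightarrow> 'm \<Rightarrow> 'm \<Rightarrow> 's pmf) \<Rightarrow> ('s list \<Rightarrow> 'm pmf) \<Rightarrow> ('s list \<Rightarrow> 'm pmf)
    \<Rightarrow> 's \<Rightarrow> 's set \<Rightarrow> real" where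
  "prob_reach delta p1 p2 s X =
     (SUP n. measure_pmf.prob (hist_pmf delta p1 p2 s n) {h. set h \<inter> X \<noteq> {}})"

definition val1 :: "('s \<Rightarrow> 'm set) \<Rightarrow> ('s \<Rightarrow> 'm set) \<Rightarrow> ('s \<Rightarrow> 'm \<Rightarrow> 'm \<Rightarrow> 's pmf) \<Rightarrow> 's set \<Rightarrow> 's \<Rightarrow> real" where
  "val1 G1 G2 delta T s =
     (SUP p1 \<in> strategies G1. INF p2 \<in> strategies G2. prob_reach delta p1 p2 s T)"

definition W2 :: "('s \<Rightarrow> 'm set) \<Rightarrow> ('s \<Rightarrow> 'm set) \<Rightarrow> ('s \<Rightarrow> 'm \<Rightarrow> 'm \<Rightarrow> 's pmf) \<Rightarrow> 's set \<Rightarrow> 's set" where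
  "W2 G1 G2 delta T = {s. val1 G1 G2 delta T s = 0}"

definition proper_strategy :: "('s \<Rightarrow> 'm set) \<Rightarrow> ('s \<Rightarrow> 'm set) \<Rightarrow> ('s \<Rightarrow> 'm \<Rightarrow> 'm \<Rightarrow> 's pmf) \<Rightarrow> 's set
    \<Rightarrow> ('s list \<Rightarrow> 'm pmf) \<Rightarrow> bool" where
  "proper_strategy G1 G2 delta T p1 \<longleftrightarrow>
     (\<forall>p2 \<in> strategies G2. \<forall>s. s \<notin> T \<union> W2 G1 G2 delta T \<longrightarrow>
        prob_reach delta p1 p2 s (T \<union> W2 G1 G2 delta T) = 1)"

definition proper_selector :: "('s \<Rightarrow> 'm set) \<Rightarrow> ('s \<Rightarrow> 'm set) \<Rightarrow> ('s \<Rightarrow> 'm \<Rightarrow> 'm \<Rightarrow> 's pmf) \<Rightarrow> 's set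
    \<Rightarrow> ('s \<Rightarrow> 'm pmf) \<Rightarrow> bool" where
  "proper_selector G1 G2 delta T \<xi> \<longleftrightarrow> proper_strategy G1 G2 delta T (memoryless \<xi>)"

end

theory Submission
  imports Defs
begin

text \<open>If the positive attractor of \<open>X = T \<union> W2\<close> missed some state, its complement would be a
  set in which player 2 can keep the play forever, so it would lie in \<open>W2\<close>; hence every state is in
  the attractor and reaches \<open>X\<close> within \<open>|S|\<close> steps along positive-probability transitions.
  Playing uniformly, player 1 picks the right move with probability at least \<open>1/|M|\<close>, so against
  every player-2 strategy \<open>X\<close> is reached within \<open>|S|\<close> steps with probability at least
  \<open>r = (c/|M|)^|S| > 0\<close>, where \<open>c\<close> is the least positive transition probability. Restarting the
  argument every \<open>|S|\<close> steps, \<open>X\<close> is missed for \<open>j|S|\<close> steps with probability at most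
  \<open>(1 - r)^j \<longrightarrow> 0\<close>.\<close>

definition play_step :: "('s \<Rightarrow> 'm \<Rightarrow> 'm \<Rightarrow> 's pmf) \<Rightarrow> ('s list \<Rightarrow> 'm pmf) \<Rightarrow> ('s list \<Rightarrow> 'm pmf)
    \<Rightarrow> 's list \<Rightarrow> 's list pmf" where
  "play_step delta p1 p2 h =
     do { a1 \<leftarrow> p1 h; a2 \<leftarrow> p2 h; t \<leftarrow> delta (last h) a1 a2; return_pmf (h @ [t]) }"

primrec play_from :: "('s \<Rightarrow> 'm \<Rightarrow> 'm \<Rightarrow> 's pmf) \<Rightarrow> ('s list \<Rightarrow> 'm pmf) \<Rightarrow> ('s list \<Rightarrow> 'm pmf)
    \<Rightarrow> 's list \<Rightarrow> nat \<Rightarrow> 's list pmf" where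
  "play_from delta p1 p2 h 0 = return_pmf h"
| "play_from delta p1 p2 h (Suc n) = bind_pmf (play_from delta p1 p2 h n) (play_step delta p1 p2)"

definition visits :: "'s set \<Rightarrow> 's list set" where
  "visits X = {h. set h \<inter> X \<noteq> {}}"

lemma hist_pmf_eq_play_from: "hist_pmf delta p1 p2 s n = play_from delta p1 p2 [s] n"
  by (induction n) (simp_all add: play_step_def[abs_def])

lemma play_from_add:
  "play_from delta p1 p2 h (m + n) = bind_pmf (play_from delta p1 p2 h m) (\<lambda>h'. play_from delta p1 p2 h' n)"
  by (induction n) (simp_all add: bind_return_pmf' bind_assoc_pmf)

lemma play_from_Suc':
  "play_from delta p1 p2 h (Suc n) = bind_pmf (play_step delta p1 p2 h) (\<lambda>h'. play_from delta p1 p2 h' n)"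
  using play_from_add[of delta p1 p2 h 1 n] by (simp add: bind_return_pmf)

lemma set_play_step:
  "h' \<in> set_pmf (play_step delta p1 p2 h) \<longleftrightarrow>
     (\<exists>a1 \<in> set_pmf (p1 h). \<exists>a2 \<in> set_pmf (p2 h). \<exists>t \<in> set_pmf (delta (last h) a1 a2). h' = h @ [t])"
  by (auto simp: play_step_def)

lemma set_play_from_prefix: "h' \<in> set_pmf (play_from delta p1 p2 h n) \<Longrightarrow> \<exists>ys. h' = h @ ys"
  by (induction n arbitrary: h') (auto simp: set_play_step, metis append_assoc)

lemma AE_play_from_visits:
  assumes "set h \<inter> X \<noteq> {}"
  shows "AE h' in measure_pmf (play_from delta p1 p2 h n). h' \<in> visits X"
  using assms by (auto simp: AE_measure_pmf_iff visits_def dest!: set_play_from_prefix)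

lemma emeasure_play_step_last:
  "emeasure (measure_pmf (play_step delta p1 p2 h)) {h'. last h' \<in> A} =
     (\<integral>\<^sup>+a2. (\<integral>\<^sup>+a1. emeasure (measure_pmf (delta (last h) a1 a2)) A \<partial>measure_pmf (p1 h)) \<partial>measure_pmf (p2 h))"
proof -
  have "play_step delta p1 p2 h =
      bind_pmf (p2 h) (\<lambda>a2. bind_pmf (p1 h) (\<lambda>a1. map_pmf (\<lambda>t. h @ [t]) (delta (last h) a1 a2)))"
    unfolding play_step_def map_pmf_def by (subst bind_commute_pmf) simp
  moreover have "(\<lambda>t. h @ [t]) -` {h'. last h' \<in> A} = A" by auto
  ultimately show ?thesis by (simp add: emeasure_map_pmf)
qed

lemma visits_prob_ge_power:
  fixes q :: real
  assumes Att0: "Att 0 = X" and q: "0 \<le> q" "q \<le> 1"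
    and step: "\<And>h k. h \<noteq> [] \<Longrightarrow> last h \<in> Att (Suc k) \<Longrightarrow> last h \<notin> X \<Longrightarrow>
        ennreal q \<le> emeasure (measure_pmf (play_step delta p1 p2 h)) {h'. last h' \<in> Att k}"
    and h: "h \<noteq> []" "last h \<in> Att k"
  shows "ennreal (q ^ k) \<le> emeasure (measure_pmf (play_from delta p1 p2 h k)) (visits X)"
  using h
proof (induction k arbitrary: h)
  case 0
  then have "h \<in> visits X" using Att0 last_in_set by (auto simp: visits_def)
  then show ?case by simp
next
  case (Suc k)
  show ?case
  proof (cases "last h \<in> X")
    case True
    then have "set h \<inter> X \<noteq> {}" using Suc.prems last_in_set by fastforce
    then have "AE h' in measure_pmf (play_from delta p1 p2 h (Suc k)). h' \<in> visits X"
      by (rule AE_play_from_visits)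
    then have "emeasure (measure_pmf (play_from delta p1 p2 h (Suc k))) (visits X) = 1"
      by (simp add: measure_pmf.emeasure_eq_1_AE del: play_from.simps)
    then show ?thesis using q by (simp add: power_le_one del: power_Suc)
  next
    case False
    let ?B = "{h'. last h' \<in> Att k}" and ?M = "measure_pmf (play_step delta p1 p2 h)"
    have "ennreal (q ^ Suc k) = ennreal (q ^ k) * ennreal q"
      using q by (simp add: ennreal_mult mult.commute)
    also have "\<dots> \<le> ennreal (q ^ k) * emeasure ?M ?B"
      using step[OF Suc.prems False] by (intro mult_left_mono) auto
    also have "\<dots> = (\<integral>\<^sup>+h'. ennreal (q ^ k) * indicator ?B h' \<partial>?M)"
      by (simp add: nn_integral_cmult_indicator)
    also have "\<dots> \<le> (\<integral>\<^sup>+h'. emeasure (measure_pmf (play_from delta p1 p2 h' k)) (visits X) \<partial>?M)"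
    proof (intro nn_integral_mono_AE, unfold AE_measure_pmf_iff, intro ballI)
      fix h' assume "h' \<in> set_pmf (play_step delta p1 p2 h)"
      then have "h' \<noteq> []" by (auto simp: set_play_step)
      then show "ennreal (q ^ k) * indicator ?B h' \<le> emeasure (measure_pmf (play_from delta p1 p2 h' k)) (visits X)"
        using Suc.IH[of h'] by (auto split: split_indicator)
    qed
    also have "\<dots> = emeasure (measure_pmf (play_from delta p1 p2 h (Suc k))) (visits X)"
      by (simp only: play_from_Suc' emeasure_bind_pmf)
    finally show ?thesis .
  qed
qed

lemma not_visits_prob_le_power:
  fixes r :: real
  assumes r: "0 \<le> r" "r \<le> 1"
    and hit: "\<And>h. h \<noteq> [] \<Longrightarrow> ennreal r \<le> emeasure (measure_pmf (play_from delta p1 p2 h N)) (visits X)"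
    and h: "h \<noteq> []"
  shows "emeasure (measure_pmf (play_from delta p1 p2 h (j * N))) (- visits X) \<le> ennreal ((1 - r) ^ j)"
  using h
proof (induction j arbitrary: h)
  case 0
  then show ?case by (simp split: split_indicator)
next
  case (Suc j)
  let ?M = "measure_pmf (play_from delta p1 p2 h N)"
  have "emeasure (measure_pmf (play_from delta p1 p2 h (Suc j * N))) (- visits X)
      = (\<integral>\<^sup>+h'. emeasure (measure_pmf (play_from delta p1 p2 h' (j * N))) (- visits X) \<partial>?M)"
    by (simp add: play_from_add)
  also have "\<dots> \<le> (\<integral>\<^sup>+h'. ennreal ((1 - r) ^ j) * indicator (- visits X) h' \<partial>?M)"
  proof (intro nn_integral_mono_AE, unfold AE_measure_pmf_iff, intro ballI)
    fix h' assume "h' \<in> set_pmf (play_from delta p1 p2 h N)"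
    then have "h' \<noteq> []" using Suc.prems by (auto dest: set_play_from_prefix)
    show "emeasure (measure_pmf (play_from delta p1 p2 h' (j * N))) (- visits X)
        \<le> ennreal ((1 - r) ^ j) * indicator (- visits X) h'"
    proof (cases "h' \<in> visits X")
      case True
      then have "AE h'' in measure_pmf (play_from delta p1 p2 h' (j * N)). h'' \<in> visits X"
        by (intro AE_play_from_visits) (simp add: visits_def)
      then have "emeasure (measure_pmf (play_from delta p1 p2 h' (j * N))) (- visits X) = 0"
        by (auto simp: AE_measure_pmf_iff measure_pmf.emeasure_eq_measure measure_pmf_zero_iff)
      then show ?thesis by simp
    next
      case False
      then show ?thesis using Suc.IH[OF \<open>h' \<noteq> []\<close>] by simp
    qed
  qed
  also have "\<dots> = ennreal ((1 - r) ^ j) * emeasure ?M (- visits X)"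
    by (simp add: nn_integral_cmult_indicator)
  also have "\<dots> \<le> ennreal ((1 - r) ^ j) * ennreal (1 - r)"
  proof (intro mult_left_mono)
    have "measure ?M (- visits X) = 1 - measure ?M (visits X)"
      using measure_pmf.prob_compl[of "visits X"] by (simp add: Compl_eq_Diff_UNIV)
    moreover have "r \<le> measure ?M (visits X)"
      using hit[OF Suc.prems] by (simp add: measure_pmf.emeasure_eq_measure)
    ultimately show "emeasure ?M (- visits X) \<le> ennreal (1 - r)"
      by (simp add: measure_pmf.emeasure_eq_measure ennreal_leI)
  qed auto
  also have "\<dots> = ennreal ((1 - r) ^ Suc j)"
    using r by (simp add: ennreal_mult[symmetric] mult.commute)
  finally show ?case .
qed

lemma prob_reach_eq_1_if_visits_prob_ge:
  fixes r :: real
  assumes r: "0 < r"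
    and hit: "\<And>h. h \<noteq> [] \<Longrightarrow> ennreal r \<le> emeasure (measure_pmf (play_from delta p1 p2 h N)) (visits X)"
  shows "prob_reach delta p1 p2 s X = 1"
proof -
  define P where "P n = measure_pmf.prob (play_from delta p1 p2 [s] n) (visits X)" for n
  have "ennreal r \<le> 1"
    using hit[of "[s]"] order_trans measure_pmf.emeasure_le_1 by blast
  then have r1: "r \<le> 1" using r by simp
  have P_ge: "1 - (1 - r) ^ j \<le> P (j * N)" for j
  proof -
    let ?M = "measure_pmf (play_from delta p1 p2 [s] (j * N))"
    have "emeasure ?M (- visits X) \<le> ennreal ((1 - r) ^ j)"
      using r r1 hit by (intro not_visits_prob_le_power) auto
    then have "measure ?M (- visits X) \<le> (1 - r) ^ j"
      using r1 by (simp add: measure_pmf.emeasure_eq_measure ennreal_le_iff)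
    moreover have "measure ?M (- visits X) = 1 - P (j * N)"
      using measure_pmf.prob_compl[of "visits X"] by (simp add: P_def Compl_eq_Diff_UNIV)
    ultimately show ?thesis by simp
  qed
  have bdd: "bdd_above (range P)" unfolding P_def by (intro bdd_aboveI[of _ 1]) auto
  have lim: "(\<lambda>j. 1 - (1 - r) ^ j) \<longlonglongrightarrow> 1"
    using tendsto_diff[OF tendsto_const LIMSEQ_power_zero[of "1 - r"]] r r1 by simp
  have "prob_reach delta p1 p2 s X = (SUP n. P n)"
    unfolding prob_reach_def P_def hist_pmf_eq_play_from visits_def ..
  also have "\<dots> = 1"
  proof (rule antisym)
    show "(SUP n. P n) \<le> 1" unfolding P_def by (rule cSUP_least) auto
    show "1 \<le> (SUP n. P n)"
      using LIMSEQ_le_const2[OF lim] cSUP_upper2[OF bdd UNIV_I P_ge] by blast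
  qed
  finally show ?thesis .
qed

definition trap :: "('s \<Rightarrow> 'm set) \<Rightarrow> ('s \<Rightarrow> 'm set) \<Rightarrow> ('s \<Rightarrow> 'm \<Rightarrow> 'm \<Rightarrow> 's pmf) \<Rightarrow> 's set \<Rightarrow> bool" where
  "trap G1 G2 delta Z \<longleftrightarrow> (\<forall>s\<in>Z. \<exists>a2\<in>G2 s. \<forall>a1\<in>G1 s. set_pmf (delta s a1 a2) \<subseteq> Z)"

primrec attractor :: "('s \<Rightarrow> 'm set) \<Rightarrow> ('s \<Rightarrow> 'm set) \<Rightarrow> ('s \<Rightarrow> 'm \<Rightarrow> 'm \<Rightarrow> 's pmf) \<Rightarrow> 's set
    \<Rightarrow> nat \<Rightarrow> 's set" where
  "attractor G1 G2 delta X 0 = X"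
| "attractor G1 G2 delta X (Suc k) = X \<union>
     {s. \<forall>a2\<in>G2 s. \<exists>a1\<in>G1 s. set_pmf (delta s a1 a2) \<inter> attractor G1 G2 delta X k \<noteq> {}}"

lemma attractor_Suc_mono: "attractor G1 G2 delta X k \<subseteq> attractor G1 G2 delta X (Suc k)"
proof (induction k)
  case (Suc k)
  then show ?case
    by (simp only: attractor.simps(2)[of _ _ _ _ "Suc k"] attractor.simps(2)[of _ _ _ _ k]) blast
qed auto

lemma trap_Compl_attractor:
  assumes "attractor G1 G2 delta X (Suc k) = attractor G1 G2 delta X k"
  shows "trap G1 G2 delta (- attractor G1 G2 delta X k)"
  unfolding trap_def
proof
  fix s assume "s \<in> - attractor G1 G2 delta X k"
  then have "s \<notin> attractor G1 G2 delta X (Suc k)" using assms by simp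
  then show "\<exists>a2\<in>G2 s. \<forall>a1\<in>G1 s. set_pmf (delta s a1 a2) \<subseteq> - attractor G1 G2 delta X k" by auto
qed

lemma attractor_eq_UNIV:
  fixes X :: "'s::finite set"
  assumes no_trap: "\<And>Z. Z \<inter> X = {} \<Longrightarrow> trap G1 G2 delta Z \<Longrightarrow> Z = {}"
  shows "attractor G1 G2 delta X CARD('s) = UNIV"
proof -
  let ?A = "attractor G1 G2 delta X"
  have "?A k \<noteq> UNIV \<Longrightarrow> k \<le> card (?A k)" for k
  proof (induction k)
    case (Suc k)
    have "?A k \<subseteq> ?A (Suc k)" by (rule attractor_Suc_mono)
    then have "?A k \<noteq> UNIV" using Suc.prems by auto
    have "X \<subseteq> ?A k" by (cases k) auto
    then have "?A (Suc k) \<noteq> ?A k"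
      using no_trap[OF _ trap_Compl_attractor] \<open>?A k \<noteq> UNIV\<close> by blast
    with \<open>?A k \<subseteq> ?A (Suc k)\<close> have "card (?A k) < card (?A (Suc k))"
      by (intro psubset_card_mono) auto
    then show ?case using Suc.IH[OF \<open>?A k \<noteq> UNIV\<close>] by simp
  qed simp
  moreover have "card (?A CARD('s)) \<le> CARD('s)" by (rule card_mono) auto
  ultimately have "?A CARD('s) \<noteq> UNIV \<Longrightarrow> card (?A CARD('s)) = card (UNIV :: 's set)"
    by (meson le_antisym)
  then show ?thesis using card_subset_eq[OF finite_class.finite_UNIV subset_UNIV] by blast
qed

lemma trap_strategy:
  assumes cgs: "cgs G1 G2 delta" and Z: "trap G1 G2 delta Z"
  obtains p2 where "p2 \<in> strategies G2"
    and "\<And>p1 s n h. p1 \<in> strategies G1 \<Longrightarrow> s \<in> Z \<Longrightarrow> h \<in> set_pmf (hist_pmf delta p1 p2 s n) \<Longrightarrow>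
        set h \<subseteq> Z"
proof -
  have "\<forall>s. \<exists>a. a \<in> G2 s \<and> (s \<in> Z \<longrightarrow> (\<forall>a1\<in>G1 s. set_pmf (delta s a1 a) \<subseteq> Z))"
    using Z cgs unfolding trap_def cgs_def by (metis all_not_in_conv)
  then obtain g where g: "\<And>s. g s \<in> G2 s" "\<And>s a1. s \<in> Z \<Longrightarrow> a1 \<in> G1 s \<Longrightarrow> set_pmf (delta s a1 (g s)) \<subseteq> Z"
    by metis
  define p2 where "p2 h = return_pmf (g (last h))" for h
  have stay: "h \<noteq> [] \<and> set h \<subseteq> Z"
    if p1: "p1 \<in> strategies G1" and "h0 \<noteq> []" "set h0 \<subseteq> Z" "h \<in> set_pmf (play_from delta p1 p2 h0 n)"
    for p1 h0 n h
    using that(4)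
  proof (induction n arbitrary: h)
    case (Suc n)
    then obtain h' where h': "h' \<in> set_pmf (play_from delta p1 p2 h0 n)"
      and "h \<in> set_pmf (play_step delta p1 p2 h')"
      by auto
    then obtain a1 t where a1: "a1 \<in> set_pmf (p1 h')"
      and t: "t \<in> set_pmf (delta (last h') a1 (g (last h')))" and h: "h = h' @ [t]"
      unfolding set_play_step p2_def by auto
    from Suc.IH[OF h'] have "h' \<noteq> []" "set h' \<subseteq> Z" by auto
    moreover have "a1 \<in> G1 (last h')" using p1 a1 \<open>h' \<noteq> []\<close> by (auto simp: strategies_def)
    ultimately have "t \<in> Z" using g(2) t last_in_set by blast
    then show ?case using h \<open>set h' \<subseteq> Z\<close> by auto
  qed (use that in auto)
  show ?thesis
  proof (rule that)
    show "p2 \<in> strategies G2" using g(1) by (auto simp: strategies_def p2_def)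
    fix p1 s n h assume p1: "p1 \<in> strategies G1" and "s \<in> Z" "h \<in> set_pmf (hist_pmf delta p1 p2 s n)"
    then show "set h \<subseteq> Z" using stay[OF p1, of "[s]"] by (simp add: hist_pmf_eq_play_from)
  qed
qed

lemma prob_reach_nonneg: "0 \<le> prob_reach delta p1 p2 s X"
proof -
  have "bdd_above (range (\<lambda>n. measure_pmf.prob (hist_pmf delta p1 p2 s n) {h. set h \<inter> X \<noteq> {}}))"
    by (intro bdd_aboveI[of _ 1]) auto
  then show ?thesis unfolding prob_reach_def by (rule cSUP_upper2[of _ _ 0]) auto
qed

lemma strategies_nonempty:
  assumes "\<And>s. G s \<noteq> {}"
  shows "strategies G \<noteq> {}"
proof -
  have "(\<lambda>h. return_pmf (SOME a. a \<in> G (last h))) \<in> strategies G"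
    using assms unfolding strategies_def by (simp add: some_in_eq)
  then show ?thesis by blast
qed

lemma trap_subset_W2:
  assumes cgs: "cgs G1 G2 delta" and Z: "trap G1 G2 delta Z" and ZT: "Z \<inter> T = {}"
  shows "Z \<subseteq> W2 G1 G2 delta T"
proof
  fix s assume s: "s \<in> Z"
  obtain p2 where p2: "p2 \<in> strategies G2"
    and stay: "\<And>p1 n h. p1 \<in> strategies G1 \<Longrightarrow> h \<in> set_pmf (hist_pmf delta p1 p2 s n) \<Longrightarrow> set h \<subseteq> Z"
    using trap_strategy[OF cgs Z] s by metis
  have "(INF p2 \<in> strategies G2. prob_reach delta p1 p2 s T) = 0" if p1: "p1 \<in> strategies G1" for p1
  proof (rule antisym)
    have "measure_pmf.prob (hist_pmf delta p1 p2 s n) {h. set h \<inter> T \<noteq> {}} = 0" for n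
      using stay[OF p1] ZT unfolding measure_pmf_zero_iff by blast
    then have "prob_reach delta p1 p2 s T = 0" by (simp add: prob_reach_def)
    moreover have "bdd_below ((\<lambda>p2. prob_reach delta p1 p2 s T) ` strategies G2)"
      by (intro bdd_belowI[of _ 0]) (auto intro: prob_reach_nonneg)
    ultimately show "(INF p2 \<in> strategies G2. prob_reach delta p1 p2 s T) \<le> 0"
      using cINF_lower p2 by metis
    show "0 \<le> (INF p2 \<in> strategies G2. prob_reach delta p1 p2 s T)"
      using p2 by (intro cINF_greatest) (auto intro: prob_reach_nonneg)
  qed
  moreover have "strategies G1 \<noteq> {}"
    using cgs unfolding cgs_def by (intro strategies_nonempty) auto
  ultimately show "s \<in> W2 G1 G2 delta T"
    unfolding W2_def val1_def by simp
qed

lemma nn_integral_pmf_of_set_ge: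
  assumes "finite G" "a \<in> G"
  shows "ennreal (1 / card G) * f a \<le> (\<integral>\<^sup>+x. f x \<partial>measure_pmf (pmf_of_set G))"
proof -
  have "pmf (pmf_of_set G) a = 1 / card G"
    using assms by (subst pmf_of_set) auto
  then have "ennreal (1 / card G) * f a = (\<integral>\<^sup>+x. f a * indicator {a} x \<partial>measure_pmf (pmf_of_set G))"
    by (simp add: nn_integral_cmult_indicator emeasure_pmf_single mult.commute)
  also have "\<dots> \<le> (\<integral>\<^sup>+x. f x \<partial>measure_pmf (pmf_of_set G))"
    by (intro nn_integral_mono) (auto split: split_indicator)
  finally show ?thesis .
qed

lemma uniform_play_step_prob_ge:
  fixes p1 :: "'s list \<Rightarrow> 'm::finite pmf" and c :: real
  assumes h: "h \<noteq> []" and p1: "p1 h = pmf_of_set (G1 (last h))" and G1: "G1 (last h) \<noteq> {}"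
    and p2: "p2 \<in> strategies G2"
    and A: "\<forall>a2\<in>G2 (last h). \<exists>a1\<in>G1 (last h). set_pmf (delta (last h) a1 a2) \<inter> A \<noteq> {}"
    and c: "\<And>a1 a2 t. t \<in> set_pmf (delta (last h) a1 a2) \<Longrightarrow> c \<le> pmf (delta (last h) a1 a2) t"
    and c0: "0 \<le> c"
  shows "ennreal (c / CARD('m)) \<le> emeasure (measure_pmf (play_step delta p1 p2 h)) {h'. last h' \<in> A}"
proof -
  let ?s = "last h"
  have "ennreal (c / CARD('m)) \<le> (\<integral>\<^sup>+a1. emeasure (measure_pmf (delta ?s a1 a2)) A \<partial>measure_pmf (p1 h))"
    if a2: "a2 \<in> set_pmf (p2 h)" for a2
  proof -
    have "a2 \<in> G2 ?s" using a2 p2 h unfolding strategies_def by auto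
    then obtain a1 t where a1: "a1 \<in> G1 ?s" and t: "t \<in> set_pmf (delta ?s a1 a2)" "t \<in> A"
      using A by blast
    have "card (G1 ?s) \<le> CARD('m)" by (rule card_mono) auto
    moreover have "0 < card (G1 ?s)" using G1 by (simp add: card_gt_0_iff)
    ultimately have "c / CARD('m) \<le> 1 / card (G1 ?s) * c"
      using c0 by (simp add: divide_left_mono)
    also have "\<dots> \<le> 1 / card (G1 ?s) * pmf (delta ?s a1 a2) t"
      using c[OF t(1)] by (simp add: divide_right_mono)
    finally have "ennreal (c / CARD('m)) \<le> ennreal (1 / card (G1 ?s)) * emeasure (measure_pmf (delta ?s a1 a2)) {t}"
      by (simp add: emeasure_pmf_single ennreal_leI flip: ennreal_mult)
    also have "\<dots> \<le> ennreal (1 / card (G1 ?s)) * emeasure (measure_pmf (delta ?s a1 a2)) A"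
      using t by (intro mult_left_mono emeasure_mono) auto
    also have "\<dots> \<le> (\<integral>\<^sup>+a1. emeasure (measure_pmf (delta ?s a1 a2)) A \<partial>measure_pmf (p1 h))"
      unfolding p1 using a1 by (intro nn_integral_pmf_of_set_ge) auto
    finally show ?thesis .
  qed
  then have "(\<integral>\<^sup>+a2. ennreal (c / CARD('m)) \<partial>measure_pmf (p2 h))
      \<le> (\<integral>\<^sup>+a2. (\<integral>\<^sup>+a1. emeasure (measure_pmf (delta ?s a1 a2)) A \<partial>measure_pmf (p1 h)) \<partial>measure_pmf (p2 h))"
    by (intro nn_integral_mono_AE) (simp add: AE_measure_pmf_iff)
  then show ?thesis by (simp add: emeasure_play_step_last)
qed

lemma min_transition_prob:
  fixes delta :: "'s::finite \<Rightarrow> 'm::finite \<Rightarrow> 'm \<Rightarrow> 's pmf"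
  obtains c where "0 < c" "c \<le> 1" "\<And>s a1 a2 t. t \<in> set_pmf (delta s a1 a2) \<Longrightarrow> c \<le> pmf (delta s a1 a2) t"
proof -
  define C where "C = {pmf (delta s a1 a2) t | s a1 a2 t. t \<in> set_pmf (delta s a1 a2)}"
  have "C \<subseteq> range (\<lambda>(s, a1, a2, t). pmf (delta s a1 a2) t)"
    unfolding C_def by (auto intro: image_eqI[of _ _ "(_, _, _, _)"])
  then have "finite (insert 1 C)" by (simp add: finite_subset)
  moreover have "0 < x" if "x \<in> insert 1 C" for x
    using that by (auto simp: C_def pmf_positive)
  ultimately show ?thesis
  proof (intro that[of "Min (insert 1 C)"])
    fix s a1 a2 t assume "finite (insert 1 C)" "t \<in> set_pmf (delta s a1 a2)"
    then show "Min (insert 1 C) \<le> pmf (delta s a1 a2) t"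
      by (intro Min_le) (auto simp: C_def)
  qed auto
qed

theorem lemma2:
  fixes G1 G2 :: "'s::finite \<Rightarrow> 'm::finite set"
    and delta :: "'s \<Rightarrow> 'm \<Rightarrow> 'm \<Rightarrow> 's pmf"
    and T :: "'s set"
    and \<xi> :: "'s \<Rightarrow> 'm pmf"
  assumes "cgs G1 G2 delta"
    and "\<forall>s \<in> T \<union> W2 G1 G2 delta T. absorbing G1 G2 delta s"
    and "selector G1 \<xi>"
    and "\<forall>s. s \<notin> T \<union> W2 G1 G2 delta T \<longrightarrow> \<xi> s = pmf_of_set (G1 s)"
  shows "proper_selector G1 G2 delta T \<xi>"
proof -
  define X where "X = T \<union> W2 G1 G2 delta T"
  obtain c where c: "0 < c" "c \<le> 1" "\<And>s a1 a2 t. t \<in> set_pmf (delta s a1 a2) \<Longrightarrow> c \<le> pmf (delta s a1 a2) t"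
    using min_transition_prob by blast
  define q where "q = c / CARD('m)"
  have "c \<le> real CARD('m)"
    using c(2) by (simp add: Suc_le_eq order_trans[of c 1])
  then have q: "0 < q" "q \<le> 1"
    using c(1) by (auto simp: q_def)
  have attractor: "attractor G1 G2 delta X CARD('s) = UNIV"
    using trap_subset_W2[OF assms(1)] by (intro attractor_eq_UNIV) (auto simp: X_def)
  have "ennreal (q ^ CARD('s)) \<le> emeasure (measure_pmf (play_from delta (memoryless \<xi>) p2 h CARD('s))) (visits X)"
    if p2: "p2 \<in> strategies G2" and "h \<noteq> []" for p2 h
    using q that(2) attractor
  proof (intro visits_prob_ge_power[where Att = "attractor G1 G2 delta X"])
    fix h :: "'s list" and k assume "h \<noteq> []" "last h \<in> attractor G1 G2 delta X (Suc k)" "last h \<notin> X"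
    then show "ennreal q \<le> emeasure (measure_pmf (play_step delta (memoryless \<xi>) p2 h)) {h'. last h' \<in> attractor G1 G2 delta X k}"
      unfolding q_def using assms(1,4) p2 c
      by (intro uniform_play_step_prob_ge) (auto simp: memoryless_def X_def cgs_def)
  qed auto
  with q show ?thesis
    unfolding proper_selector_def proper_strategy_def X_def[symmetric]
    by (blast intro: prob_reach_eq_1_if_visits_prob_ge[of "q ^ CARD('s)"] zero_less_power)
qed

end
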